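(* In the setting below with $\Phi_\lambda=\Phi_{+,\lambda}$, let $x^*\in\mathbb R^n$ with $\Theta(x^* )<\infty$, let $J_*:=\{i\in[r]:(Bx^*-b)_i\ne0\}$ and $\bar J_*:=[r]\setminus J_*$, and consider the convex program $$(\mathrm P_+)\qquad \min_x\ \Theta(x)\quad\text{s.t.}\quad (Bx-b)_{\bar J_*}\le0.$$ Then: (i) $x^*$ is a stationary point of (P) if and only if it is a KKT point of $(\mathrm P_+)$; (ii) $x^*$ is a local minimizer of $F$ if and only if it is a global minimizer of $(\mathrm P_+)$.
   Context: Let $f:\mathbb R^n\to(-\infty,\infty]$, $g:\mathbb R^m\to(-\infty,\infty]$ be proper, lsc and convex; $A\in\mathbb R^{m\times n}$, $B\in\mathbb R^{r\times n}$, $b\in\mathbb R^r$, $\lambda\in\mathbb R^r$, $\lambda>0$. $\Theta(x)=f(x)+g(Ax)$, $\Phi_{+,\lambda}(u)=\sum_{i=1}^r\lambda_i\mathbf 1_{\{u_i>0\}}$, and problem (P) is $\min_x F(x)=\Theta(x)+\Phi_{+,\lambda}(Bx-b)$. $\partial$ denotes the limiting (Mordukhovich) subdifferential (the usual convex subdifferential for convex functions); in particular $\partial\Phi_{+,\lambda}(u)=\{z\in\mathbb R^r: z_i\in\mathbb R_+\text{ if }u_i=0,\ z_i=0\text{ otherwise}\}$. A point $x^*$ is a stationary point of (P) if $0\in\partial f(x^* )+A^\top\partial g(Ax^* )+B^\top\partial\Phi_{+,\lambda}(Bx^*-b)$. A point $x$ is a KKT point of $(\mathrm P_+)$ if there exists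 $\zeta\in\mathbb R^{|\bar J_*|}_+$ with $0\in\partial f(x)+A^\top\partial g(Ax)+B_{\bar J_*:}^\top\zeta$ and $0\le\zeta\perp(Bx-b)_{\bar J_*}\le0$, where $B_{\bar J_*:}$ is the submatrix of rows of $B$ indexed by $\bar J_*$ and $u_{\bar J_*}$ the corresponding subvector. *)

theory Defs
  imports "HOL-Analysis.Analysis"
begin

definition proper_fun :: "('a \<Rightarrow> ereal) \<Rightarrow> bool" where
  "proper_fun f \<longleftrightarrow> (\<forall>x. f x \<noteq> -\<infinity>) \<and> (\<exists>x. f x < \<infinity>)"

definition lsc_fun :: "('a::topological_space \<Rightarrow> ereal) \<Rightarrow> bool" where
  "lsc_fun f \<longleftrightarrow> (\<forall>x. f x \<le> Liminf (at x) f)"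

definition convex_fun :: "('a::real_vector \<Rightarrow> ereal) \<Rightarrow> bool" where
  "convex_fun f \<longleftrightarrow> (\<forall>x y t. 0 \<le> t \<and> t \<le> 1 \<longrightarrow>
      f ((1 - t) *\<^sub>R x + t *\<^sub>R y) \<le> ereal (1 - t) * f x + ereal t * f y)"

text \<open>Convex subdifferential (coincides with the limiting one for proper lsc convex functions).\<close>
definition subdiff :: "('a::real_inner \<Rightarrow> ereal) \<Rightarrow> 'a \<Rightarrow> 'a set" where
  "subdiff f x = {v. \<bar>f x\<bar> \<noteq> \<infinity> \<and> (\<forall>y. f y \<ge> f x + ereal (v \<bullet> (y - x)))}"

definition Phi_plus :: "real^'r \<Rightarrow> real^'r \<Rightarrow> real" where
  "Phi_plus lam u = (\<Sum>i\<in>UNIV. if u $ i > 0 then lam $ i else 0)"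

text \<open>The (limiting) subdifferential of Phi_{+,lambda}, as given explicitly in the paper.\<close>
definition subdiff_Phi_plus :: "real^'r \<Rightarrow> (real^'r) set" where
  "subdiff_Phi_plus u = {z. \<forall>i. (u $ i = 0 \<longrightarrow> z $ i \<ge> 0) \<and> (u $ i \<noteq> 0 \<longrightarrow> z $ i = 0)}"

definition Theta :: "(real^'n \<Rightarrow> ereal) \<Rightarrow> (real^'m \<Rightarrow> ereal) \<Rightarrow> real^'n^'m \<Rightarrow> real^'n \<Rightarrow> ereal" where
  "Theta f g A x = f x + g (A *v x)"

definition F_obj :: "(real^'n \<Rightarrow> ereal) \<Rightarrow> (real^'m \<Rightarrow> ereal) \<Rightarrow> real^'n^'m \<Rightarrow> real^'n^'r
     \<Rightarrow> real^'r \<Rightarrow> real^'r \<Rightarrow> real^'n \<Rightarrow> ereal" where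
  "F_obj f g A B b lam x = Theta f g A x + ereal (Phi_plus lam (B *v x - b))"

definition stationary_P where
  "stationary_P f g A B b x \<longleftrightarrow>
     (\<exists>u\<in>subdiff f x. \<exists>w\<in>subdiff g (A *v x). \<exists>z\<in>subdiff_Phi_plus (B *v x - b).
        u + transpose A *v w + transpose B *v z = 0)"

definition Jbar :: "real^'n^'r \<Rightarrow> real^'r \<Rightarrow> real^'n \<Rightarrow> 'r set" where
  "Jbar B b xs = {i. (B *v xs - b) $ i = 0}"

text \<open>KKT point of (P_+) (constraint index set J, multiplier zeta in R^J_+ encoded as a
  vector in R^r vanishing outside J, so B_J^T zeta_J = B^T zeta).\<close>
definition KKT_Pplus where
  "KKT_Pplus f g A B b J x \<longleftrightarrow>
     (\<exists>\<zeta>::real^'r. (\<forall>i. i \<notin> J \<longrightarrow> \<zeta> $ i = 0) \<and>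
        (\<forall>i\<in>J. \<zeta> $ i \<ge> 0 \<and> (B *v x - b) $ i \<le> 0 \<and> \<zeta> $ i * (B *v x - b) $ i = 0) \<and>
        (\<exists>u\<in>subdiff f x. \<exists>w\<in>subdiff g (A *v x). u + transpose A *v w + transpose B *v \<zeta> = 0))"

definition local_minimizer :: "('a::metric_space \<Rightarrow> ereal) \<Rightarrow> 'a \<Rightarrow> bool" where
  "local_minimizer F xs \<longleftrightarrow> (\<exists>\<epsilon>>0. \<forall>x. dist x xs < \<epsilon> \<longrightarrow> F xs \<le> F x)"

definition feasible_Pplus :: "real^'n^'r \<Rightarrow> real^'r \<Rightarrow> 'r set \<Rightarrow> real^'n \<Rightarrow> bool" where
  "feasible_Pplus B b J x \<longleftrightarrow> (\<forall>i\<in>J. (B *v x - b) $ i \<le> 0)"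

definition global_minimizer_Pplus where
  "global_minimizer_Pplus f g A B b J xs \<longleftrightarrow> feasible_Pplus B b J xs \<and>
     (\<forall>x. feasible_Pplus B b J x \<longrightarrow> Theta f g A xs \<le> Theta f g A x)"

end

(* Near x*, the constraints with (Bx* - b)_i <> 0 keep their strict sign, so Phi_{+,lambda} is
   constant on the feasible points of (P_+) there and jumps up by at least some lambda_i > 0 at
   every infeasible point.  Hence a local minimizer of F is a local, and by convexity of Theta a
   global, minimizer of (P_+); conversely, lower semicontinuity keeps Theta from dropping by as
   much as lambda_i near x*, so the jump cannot be compensated.  Part (i) is the observation that
   the subdifferential of Phi_{+,lambda} at Bx* - b consists of exactly the admissible KKT
   multipliers, complementarity being automatic on the active set. *)

theory Submission
  imports Defs
begin

lemma stationary_P_iff_KKT_Pplus: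
  "stationary_P f g A B b x \<longleftrightarrow> KKT_Pplus f g A B b (Jbar B b x) x"
proof -
  have "z \<in> subdiff_Phi_plus (B *v x - b) \<longleftrightarrow>
      (\<forall>i. i \<notin> Jbar B b x \<longrightarrow> z $ i = 0) \<and>
      (\<forall>i\<in>Jbar B b x. 0 \<le> z $ i \<and> (B *v x - b) $ i \<le> 0 \<and> z $ i * (B *v x - b) $ i = 0)" for z
    unfolding subdiff_Phi_plus_def Jbar_def by auto
  then show ?thesis
    unfolding stationary_P_def KKT_Pplus_def by blast
qed

lemma convex_fun_add:
  fixes f g :: "'a::real_vector \<Rightarrow> ereal"
  assumes "convex_fun f" "convex_fun g"
  shows "convex_fun (\<lambda>x. f x + g x)"
  unfolding convex_fun_def
proof (intro allI impI)
  fix x y :: 'a and t :: real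
  assume t: "0 \<le> t \<and> t \<le> 1"
  let ?z = "(1 - t) *\<^sub>R x + t *\<^sub>R y"
  have "f ?z + g ?z \<le> (ereal (1 - t) * f x + ereal t * f y) + (ereal (1 - t) * g x + ereal t * g y)"
    using assms t unfolding convex_fun_def by (intro add_mono) auto
  also have "\<dots> = ereal (1 - t) * (f x + g x) + ereal t * (f y + g y)"
    using t by (simp add: ereal_pos_distrib add_ac)
  finally show "f ?z + g ?z \<le> ereal (1 - t) * (f x + g x) + ereal t * (f y + g y)" .
qed

lemma convex_fun_compose_linear:
  assumes "convex_fun g" "linear L"
  shows "convex_fun (\<lambda>x. g (L x))"
  using assms unfolding convex_fun_def by (simp add: linear_add linear_scale)

lemma convex_fun_Theta:
  assumes "convex_fun f" "convex_fun g"
  shows "convex_fun (Theta f g A)"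
  unfolding Theta_def
  using assms by (simp add: convex_fun_add convex_fun_compose_linear)

text \<open>For small \<open>t > 0\<close> the point \<open>seg t\<close> of the segment lies in the neighbourhood,
  so \<open>h x \<le> h (seg t) \<le> (1 - t) h x + t h y\<close>.\<close>
lemma convex_fun_local_min_imp_min:
  fixes h :: "'a::real_normed_vector \<Rightarrow> ereal"
  assumes h: "convex_fun h" "\<bar>h x\<bar> \<noteq> \<infinity>"
    and C: "convex C" "x \<in> C" "y \<in> C"
    and loc: "eventually (\<lambda>z. z \<in> C \<longrightarrow> h x \<le> h z) (nhds x)"
  shows "h x \<le> h y"
proof -
  define seg where "seg t = (1 - t) *\<^sub>R x + t *\<^sub>R y" for t :: real
  have "(seg \<longlongrightarrow> seg 0) (at_right 0)"
    unfolding seg_def by (intro tendsto_intros)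
  then have "filterlim seg (nhds x) (at_right 0)"
    by (simp add: seg_def)
  from eventually_compose_filterlim[OF loc this]
  have "eventually (\<lambda>t. seg t \<in> C \<longrightarrow> h x \<le> h (seg t)) (at_right 0)" .
  moreover have "eventually (\<lambda>t. 0 < t \<and> t < 1) (at_right (0::real))"
    by (rule eventually_at_rightI[of 0 1]) auto
  ultimately obtain t where t: "0 < t" "t < 1" and "seg t \<in> C \<longrightarrow> h x \<le> h (seg t)"
    using eventually_happens'[OF trivial_limit_at_right_real eventually_conj] by blast
  moreover have "seg t \<in> C"
    unfolding seg_def using C t by (intro convexD) auto
  ultimately have "h x \<le> ereal (1 - t) * h x + ereal t * h y"
    using h(1) t unfolding convex_fun_def seg_def by (metis less_imp_le order_trans)
  with h(2) t show ?thesis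
    by (cases "h x"; cases "h y") (auto simp: algebra_simps)
qed

lemma lsc_fun_eventually_gt:
  assumes "lsc_fun h" "c < h z"
  shows "eventually (\<lambda>y. c < h y) (nhds z)"
proof -
  have "h z \<le> Liminf (at z) h" using assms(1) unfolding lsc_fun_def by blast
  then have "eventually (\<lambda>y. c < h y) (at z)" using assms(2) le_Liminf_iff by blast
  then have "eventually (\<lambda>y. y \<noteq> z \<longrightarrow> c < h y) (nhds z)"
    by (simp add: eventually_at_filter)
  then show ?thesis
    by (rule eventually_mono) (use assms(2) in auto)
qed

lemma Theta_eventually_gt:
  assumes "lsc_fun f" "lsc_fun g" "f x = ereal a" "g (A *v x) = ereal c" "0 < e"
  shows "eventually (\<lambda>y. ereal (a + c - e) < Theta f g A y) (nhds x)"
proof -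
  have "eventually (\<lambda>y. ereal (a - e / 2) < f y) (nhds x)"
    using assms by (intro lsc_fun_eventually_gt) auto
  moreover have "eventually (\<lambda>z. ereal (c - e / 2) < g z) (nhds (A *v x))"
    using assms by (intro lsc_fun_eventually_gt) auto
  then have "eventually (\<lambda>y. ereal (c - e / 2) < g (A *v y)) (nhds x)"
    by (rule eventually_compose_filterlim)
       (use matrix_vector_mult_linear_continuous_at in \<open>simp add: isCont_def tendsto_nhds_iff\<close>)
  ultimately show ?thesis
    unfolding Theta_def
  proof eventually_elim
    case (elim y)
    then have "ereal (a - e / 2) + ereal (c - e / 2) < f y + g (A *v y)"
      by (rule ereal_add_strict_mono2)
    then show ?case by simp
  qed
qed

lemma Theta_finite_parts:
  assumes "proper_fun f" "proper_fun g" "Theta f g A x < \<infinity>"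
  obtains a c where "f x = ereal a" "g (A *v x) = ereal c"
proof -
  have "f x \<noteq> -\<infinity>" "g (A *v x) \<noteq> -\<infinity>"
    using assms(1,2) unfolding proper_fun_def by auto
  with assms(3) that show ?thesis
    unfolding Theta_def by (cases "f x"; cases "g (A *v x)") auto
qed

lemma local_minimizer_iff_eventually:
  "local_minimizer F x \<longleftrightarrow> eventually (\<lambda>y. F x \<le> F y) (nhds x)"
  unfolding local_minimizer_def eventually_nhds_metric by blast

definition preserves_strict_signs :: "real^'r \<Rightarrow> real^'r \<Rightarrow> bool" where
  "preserves_strict_signs u v \<longleftrightarrow> (\<forall>i. (0 < u $ i \<longrightarrow> 0 < v $ i) \<and> (u $ i < 0 \<longrightarrow> v $ i < 0))"

lemma eventually_preserves_strict_signs: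
  fixes u :: "'a::t2_space \<Rightarrow> real^'r"
  assumes "isCont u x"
  shows "eventually (\<lambda>y. preserves_strict_signs (u x) (u y)) (nhds x)"
proof -
  have "(u \<longlongrightarrow> u x) (nhds x)"
    using assms by (simp add: isCont_def tendsto_nhds_iff)
  then have lim: "((\<lambda>y. u y $ i) \<longlongrightarrow> u x $ i) (nhds x)" for i
    by (rule tendsto_vec_nth)
  have "eventually (\<lambda>y. (0 < u x $ i \<longrightarrow> 0 < u y $ i) \<and> (u x $ i < 0 \<longrightarrow> u y $ i < 0)) (nhds x)"
    for i
    using order_tendstoD[OF lim[of i], of 0] by (cases "0 < u x $ i"; cases "u x $ i < 0") auto
  then show ?thesis
    unfolding preserves_strict_signs_def by (simp add: eventually_all_finite)
qed

lemma Phi_plus_eq_if_preserves_strict_signs: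
  assumes "preserves_strict_signs u v" "\<forall>i. u $ i = 0 \<longrightarrow> v $ i \<le> 0"
  shows "Phi_plus lam v = Phi_plus lam u"
  unfolding Phi_plus_def
proof (rule sum.cong[OF refl])
  fix i
  have "0 < v $ i \<longleftrightarrow> 0 < u $ i"
    using assms unfolding preserves_strict_signs_def
    by (cases rule: linorder_cases[of "u $ i" 0]) auto
  then show "(if 0 < v $ i then lam $ i else 0) = (if 0 < u $ i then lam $ i else 0)"
    by simp
qed

lemma Phi_plus_add_le:
  assumes "preserves_strict_signs u v" "\<forall>i. 0 \<le> lam $ i" "u $ j \<le> 0" "0 < v $ j"
  shows "Phi_plus lam u + lam $ j \<le> Phi_plus lam v"
proof -
  let ?d = "\<lambda>i. (if 0 < v $ i then lam $ i else 0) - (if 0 < u $ i then lam $ i else 0)"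
  have "\<forall>i. 0 \<le> ?d i"
    using assms(1,2) unfolding preserves_strict_signs_def by auto
  then have "?d j \<le> sum ?d UNIV"
    by (intro member_le_sum) auto
  moreover have "?d j = lam $ j"
    using assms(3,4) by simp
  ultimately show ?thesis
    unfolding Phi_plus_def by (simp add: sum_subtractf)
qed

lemma feasible_Pplus_Jbar_iff:
  "feasible_Pplus B b (Jbar B b x) y \<longleftrightarrow> (\<forall>i. (B *v x - b) $ i = 0 \<longrightarrow> (B *v y - b) $ i \<le> 0)"
  unfolding feasible_Pplus_def Jbar_def by blast

lemma convex_feasible_Pplus:
  fixes B :: "real^'n^'r"
  shows "convex {y. feasible_Pplus B b J y}"
  unfolding convex_def feasible_Pplus_def
proof (intro ballI allI impI, clarify)
  fix x y :: "real^'n" and s t :: real and i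
  assume x: "\<forall>i\<in>J. (B *v x - b) $ i \<le> 0" and y: "\<forall>i\<in>J. (B *v y - b) $ i \<le> 0"
    and st: "0 \<le> s" "0 \<le> t" "s + t = 1" and i: "i \<in> J"
  have "B *v (s *\<^sub>R x + t *\<^sub>R y) - b = s *\<^sub>R (B *v x - b) + t *\<^sub>R (B *v y - b)"
    using st(3) by (simp add: algebra_simps flip: scaleR_add_left)
  then show "(B *v (s *\<^sub>R x + t *\<^sub>R y) - b) $ i \<le> 0"
    using x y st i by (simp add: add_nonpos_nonpos mult_nonneg_nonpos)
qed

lemma global_minimizer_Pplus_if_local_minimizer:
  assumes f: "proper_fun f" "convex_fun f" and g: "proper_fun g" "convex_fun g"
    and fin: "Theta f g A x < \<infinity>"
    and loc: "local_minimizer (F_obj f g A B b lam) x"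
  shows "global_minimizer_Pplus f g A B b (Jbar B b x) x"
proof -
  let ?C = "{y. feasible_Pplus B b (Jbar B b x) y}"
  obtain a c where a: "f x = ereal a" and c: "g (A *v x) = ereal c"
    using Theta_finite_parts[OF f(1) g(1) fin] .
  have "eventually (\<lambda>y. F_obj f g A B b lam x \<le> F_obj f g A B b lam y) (nhds x)"
    using loc by (simp add: local_minimizer_iff_eventually)
  moreover have "eventually (\<lambda>y. preserves_strict_signs (B *v x - b) (B *v y - b)) (nhds x)"
    by (intro eventually_preserves_strict_signs continuous_intros)
  ultimately have loc_C: "eventually (\<lambda>y. y \<in> ?C \<longrightarrow> Theta f g A x \<le> Theta f g A y) (nhds x)"
  proof eventually_elim
    case (elim y)
    show ?case
    proof
      assume "y \<in> ?C"
      then have "Phi_plus lam (B *v y - b) = Phi_plus lam (B *v x - b)"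
        using elim(2) by (intro Phi_plus_eq_if_preserves_strict_signs) (auto simp: feasible_Pplus_Jbar_iff)
      then show "Theta f g A x \<le> Theta f g A y"
        using elim(1) unfolding F_obj_def by (simp add: ereal_add_le_add_iff2)
    qed
  qed
  have Theta_finite: "\<bar>Theta f g A x\<bar> \<noteq> \<infinity>"
    using a c by (simp add: Theta_def)
  have feasible: "x \<in> ?C"
    by (simp add: feasible_Pplus_Jbar_iff)
  have "Theta f g A x \<le> Theta f g A y" if "y \<in> ?C" for y
    by (rule convex_fun_local_min_imp_min[OF convex_fun_Theta[OF f(2) g(2)] Theta_finite
          convex_feasible_Pplus feasible that loc_C])
  then show ?thesis
    unfolding global_minimizer_Pplus_def by (simp add: feasible_Pplus_Jbar_iff)
qed

lemma local_minimizer_if_global_minimizer_Pplus: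
  assumes f: "proper_fun f" "lsc_fun f" and g: "proper_fun g" "lsc_fun g"
    and lam: "\<forall>i. 0 < lam $ i"
    and fin: "Theta f g A x < \<infinity>"
    and glob: "global_minimizer_Pplus f g A B b (Jbar B b x) x"
  shows "local_minimizer (F_obj f g A B b lam) x"
proof -
  obtain a c where a: "f x = ereal a" and c: "g (A *v x) = ereal c"
    using Theta_finite_parts[OF f(1) g(1) fin] .
  have "eventually (\<lambda>y. ereal (a + c - lam $ i) < Theta f g A y) (nhds x)" for i
    using Theta_eventually_gt[OF f(2) g(2) a c] lam by blast
  then have "eventually (\<lambda>y. \<forall>i. ereal (a + c - lam $ i) < Theta f g A y) (nhds x)"
    by (simp add: eventually_all_finite)
  moreover have "eventually (\<lambda>y. preserves_strict_signs (B *v x - b) (B *v y - b)) (nhds x)"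
    by (intro eventually_preserves_strict_signs continuous_intros)
  ultimately have "eventually (\<lambda>y. F_obj f g A B b lam x \<le> F_obj f g A B b lam y) (nhds x)"
  proof eventually_elim
    case (elim y)
    show ?case
    proof (cases "feasible_Pplus B b (Jbar B b x) y")
      case True
      then have "Phi_plus lam (B *v y - b) = Phi_plus lam (B *v x - b)"
        using elim(2) by (intro Phi_plus_eq_if_preserves_strict_signs) (auto simp: feasible_Pplus_Jbar_iff)
      moreover have "Theta f g A x \<le> Theta f g A y"
        using glob True unfolding global_minimizer_Pplus_def by blast
      ultimately show ?thesis
        unfolding F_obj_def by (simp add: add_right_mono)
    next
      case False
      then obtain j where "(B *v x - b) $ j = 0" "0 < (B *v y - b) $ j"
        by (auto simp: feasible_Pplus_Jbar_iff)
      then have "Phi_plus lam (B *v x - b) + lam $ j \<le> Phi_plus lam (B *v y - b)"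
        using elim(2) lam by (intro Phi_plus_add_le) (auto simp: less_imp_le)
      then have "ereal (a + c - lam $ j) + ereal (Phi_plus lam (B *v x - b) + lam $ j)
          \<le> Theta f g A y + ereal (Phi_plus lam (B *v y - b))"
        by (intro add_mono less_imp_le[OF elim(1)[rule_format]]) simp
      then show ?thesis
        unfolding F_obj_def Theta_def using a c by (simp add: add.assoc)
    qed
  qed
  then show ?thesis
    by (simp add: local_minimizer_iff_eventually)
qed

theorem mainTheorem10:
  fixes f :: "real^'n \<Rightarrow> ereal" and g :: "real^'m \<Rightarrow> ereal"
    and A :: "real^'n^'m" and B :: "real^'n^'r" and b lam :: "real^'r"
    and xs :: "real^'n"
  assumes f: "proper_fun f" "lsc_fun f" "convex_fun f"
    and g: "proper_fun g" "lsc_fun g" "convex_fun g"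
    and lam: "\<forall>i. lam $ i > 0"
    and fin: "Theta f g A xs < \<infinity>"
  shows "(stationary_P f g A B b xs \<longleftrightarrow> KKT_Pplus f g A B b (Jbar B b xs) xs)
       \<and> (local_minimizer (F_obj f g A B b lam) xs \<longleftrightarrow>
            global_minimizer_Pplus f g A B b (Jbar B b xs) xs)"
  using stationary_P_iff_KKT_Pplus
    global_minimizer_Pplus_if_local_minimizer[OF f(1,3) g(1,3) fin]
    local_minimizer_if_global_minimizer_Pplus[OF f(1,2) g(1,2) lam fin]
  by blast

end
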